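(* Let $I$ be a BPPS instance with $d$ scenarios in which every item has size at least $\varepsilon^2$, let $\bar I$ be its linearly grouped instance, let $\bar{\mathcal{P}}^1$ be an optimal solution for $\bar I$, and let $\mathcal{P}^1$ be obtained from $\bar{\mathcal{P}}^1$ by replacing each item of $\bar G_t^\ell$ by its corresponding item of $G_t^\ell$. Then $\mathrm{val}_{BPPS}(\mathcal{P}^1)\le\mathrm{OPT}(I)$.
   Context: A BPPS instance has $d$ scenarios, items $\mathcal{I}$, each item $i$ with size $s_i$ and type $\mathcal{K}_i\subseteq\{1,\dots,d\}$, and bins of capacity $1$; $S_k=\{i:k\in\mathcal{K}_i\}$. A packing is a partition $\mathcal{P}$ of a set of items with $\sum_{i\in B\cap S_k}s_i\le1$ for all $B\in\mathcal{P}$ and all $k$; its value is $\mathrm{val}_{BPPS}(\mathcal{P})=\max_k|\{B\in\mathcal{P}:B\cap S_k\ne\emptyset\}|$; $\mathrm{OPT}(I)$ is the minimum value of a packing of all items of $I$. $\mathcal{T}$ is the set of all types. Fix $\varepsilon\in(0,1/4]$ with $1/\varepsilon$ an integer, $m=2^d/\varepsilon^3-1$. For each type $t$, the items of type $t$ sorted in nonincreasing size are partitioned into consecutive groups $G_t^0,\dots,G_t^m$, each of the first $m$ having $\lceil|\mathcal{I}_t|/(m+1)\rceil$ items and the last at most that many. For $\ell\in\{1,\dots,m\}$, $\bar G_t^\ell$ contains, for each item of $G_t^\ell$, a corresponding new item of type $t$ with size equal to the largest size in $G_t^\ell$ (this gives a bijection between $G_t^\ell$ and $\bar G_t^\ell$).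 The linearly grouped instance $\bar I$ has item set $\bigcup_{t,\ \ell\ge1}\bar G_t^\ell$. *)

theory Defs
  imports Complex_Main "HOL-Library.Disjoint_Sets"
begin

definition bpps_instance :: "nat \<Rightarrow> 'i set \<Rightarrow> ('i \<Rightarrow> real) \<Rightarrow> ('i \<Rightarrow> nat set) \<Rightarrow> bool" where
  "bpps_instance d X s K \<longleftrightarrow> d \<ge> 1 \<and> finite X \<and>
     (\<forall>i\<in>X. K i \<subseteq> {1..d} \<and> 0 < s i \<and> s i \<le> 1)"

definition is_packing :: "nat \<Rightarrow> ('i \<Rightarrow> real) \<Rightarrow> ('i \<Rightarrow> nat set) \<Rightarrow> 'i set \<Rightarrow> 'i set set \<Rightarrow> bool" where
  "is_packing d s K X P \<longleftrightarrow> partition_on X P \<and>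
     (\<forall>B\<in>P. \<forall>k\<in>{1..d}. (\<Sum>i\<in>{i\<in>B. k \<in> K i}. s i) \<le> 1)"

definition val_bpps :: "nat \<Rightarrow> ('i \<Rightarrow> nat set) \<Rightarrow> 'i set set \<Rightarrow> nat" where
  "val_bpps d K P = Max ((\<lambda>k. card {B\<in>P. \<exists>i\<in>B. k \<in> K i}) ` {1..d})"

definition OPT_bpps :: "nat \<Rightarrow> ('i \<Rightarrow> real) \<Rightarrow> ('i \<Rightarrow> nat set) \<Rightarrow> 'i set \<Rightarrow> nat" where
  "OPT_bpps d s K X = (LEAST n. \<exists>P. is_packing d s K X P \<and> val_bpps d K P = n)"

definition grp_size :: "nat \<Rightarrow> 'i list \<Rightarrow> nat" where
  "grp_size m xs = nat \<lceil>real (length xs) / real (m + 1)\<rceil>"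

definition grp :: "nat \<Rightarrow> 'i list \<Rightarrow> nat \<Rightarrow> 'i set" where
  "grp m xs l = {xs ! p | p. p < length xs \<and> p div grp_size m xs = l}"

definition sorted_type_lists :: "'i set \<Rightarrow> ('i \<Rightarrow> real) \<Rightarrow> ('i \<Rightarrow> nat set) \<Rightarrow> (nat set \<Rightarrow> 'i list) \<Rightarrow> bool" where
  "sorted_type_lists X s K L \<longleftrightarrow> (\<forall>t. distinct (L t) \<and> set (L t) = {i\<in>X. K i = t}
      \<and> sorted_wrt (\<lambda>a b. s a \<ge> s b) (L t))"

text \<open>The linearly grouped instance: the new item corresponding to item i of group
  G_t^l (l \<ge> 1) is (i,l); its size is the largest size in G_t^l, its type is t.\<close>

definition lg_items :: "nat \<Rightarrow> 'i set \<Rightarrow> ('i \<Rightarrow> nat set) \<Rightarrow> (nat set \<Rightarrow> 'i list) \<Rightarrow> ('i \<times> nat) set" where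
  "lg_items m X K L = {(i, l) | i l. i \<in> X \<and> i \<in> grp m (L (K i)) l \<and> 1 \<le> l}"

definition lg_size :: "nat \<Rightarrow> ('i \<Rightarrow> real) \<Rightarrow> ('i \<Rightarrow> nat set) \<Rightarrow> (nat set \<Rightarrow> 'i list) \<Rightarrow> 'i \<times> nat \<Rightarrow> real" where
  "lg_size m s K L = (\<lambda>(i, l). Max (s ` grp m (L (K i)) l))"

definition lg_type :: "('i \<Rightarrow> nat set) \<Rightarrow> 'i \<times> nat \<Rightarrow> nat set" where
  "lg_type K = (\<lambda>(i, l). K i)"

end

theory Submission
  imports Defs
begin

text \<open>Let \<open>q\<close> be the group size of type \<open>t\<close>. Sending the new item of \<open>Gbar\<^sub>t\<^sup>l\<close>
  (\<open>l \<ge> 1\<close>) that corresponds to position \<open>p\<close> of the sorted list of type \<open>t\<close> to the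
  item at position \<open>p - q\<close> is an injection of the grouped instance \<open>Ibar\<close> into \<open>I\<close>.
  It keeps types and does not decrease sizes, because the target lies in
  \<open>G\<^sub>t\<^sup>l\<^sup>-\<^sup>1\<close> and so dominates all of \<open>G\<^sub>t\<^sup>l\<close>. Pulling an optimal packing
  of \<open>I\<close> back along this injection gives a packing of \<open>Ibar\<close> of no larger value, so
  \<open>OPT(Ibar) \<le> OPT(I)\<close>. Replacing the items of \<open>Pbar\<close> by their originals maps bins
  onto bins and keeps types, so \<open>val(P\<^sup>1) \<le> val(Pbar) = OPT(Ibar)\<close>.\<close>

lemma Max_image_mono:
  fixes f g :: "'a \<Rightarrow> 'b::linorder"
  assumes "finite A" "\<And>x. x \<in> A \<Longrightarrow> f x \<le> g x"
  shows "Max (f ` A) \<le> Max (g ` A)"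
proof (cases "A = {}")
  case False
  then show ?thesis
    using assms by (subst Max_le_iff) (auto intro: order.trans[OF _ Max_ge])
qed simp

lemma is_packing_finite:
  assumes "is_packing d s K X P" "finite X"
  shows "finite P"
  using assms unfolding is_packing_def partition_on_def by (meson finite_UnionD)

lemma val_bpps_le_by_block_map:
  assumes "finite P"
    and "\<And>C y k. C \<in> Q \<Longrightarrow> y \<in> C \<Longrightarrow> k \<in> K' y \<Longrightarrow> \<exists>B\<in>P. C = F B \<and> (\<exists>x\<in>B. k \<in> K x)"
  shows "val_bpps d K' Q \<le> val_bpps d K P"
  unfolding val_bpps_def
proof (rule Max_image_mono)
  fix k
  let ?P\<^sub>k = "{B\<in>P. \<exists>x\<in>B. k \<in> K x}"
  have "{C\<in>Q. \<exists>y\<in>C. k \<in> K' y} \<subseteq> F ` ?P\<^sub>k"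
    using assms(2) by blast
  then have "card {C\<in>Q. \<exists>y\<in>C. k \<in> K' y} \<le> card (F ` ?P\<^sub>k)"
    using assms(1) by (intro card_mono) auto
  also have "\<dots> \<le> card ?P\<^sub>k"
    using assms(1) by (intro card_image_le) auto
  finally show "card {C\<in>Q. \<exists>y\<in>C. k \<in> K' y} \<le> card ?P\<^sub>k" .
qed simp

lemma val_bpps_image_blocks:
  assumes "finite P" "\<And>B x. B \<in> P \<Longrightarrow> x \<in> B \<Longrightarrow> K' (f x) = K x"
  shows "val_bpps d K' ((`) f ` P) \<le> val_bpps d K P"
  using assms by (intro val_bpps_le_by_block_map[where F = "(`) f"]) force+

definition preimage_blocks :: "('j \<Rightarrow> 'i) \<Rightarrow> 'j set \<Rightarrow> 'i set set \<Rightarrow> 'j set set" where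
  "preimage_blocks g Y P = (\<lambda>B. Y \<inter> g -` B) ` P - {{}}"

lemma partition_on_preimage_blocks:
  assumes "partition_on X P" "g ` Y \<subseteq> X"
  shows "partition_on Y (preimage_blocks g Y P)"
proof -
  have "partition_on (Y \<inter> g -` X) (preimage_blocks g Y P)"
    unfolding preimage_blocks_def
    by (rule partition_on_transform[OF assms(1)]) (auto simp: disjnt_def)
  moreover have "Y \<inter> g -` X = Y"
    using assms(2) by blast
  ultimately show ?thesis by simp
qed

lemma is_packing_preimage_blocks:
  assumes P: "is_packing d s K X P" and "finite X" "\<forall>i\<in>X. 0 \<le> s i"
    and g: "inj_on g Y" "g ` Y \<subseteq> X"
    and type: "\<And>y. y \<in> Y \<Longrightarrow> K' y = K (g y)"
    and size: "\<And>y. y \<in> Y \<Longrightarrow> s' y \<le> s (g y)"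
  shows "is_packing d s' K' Y (preimage_blocks g Y P)"
  unfolding is_packing_def
proof (intro conjI ballI)
  have part: "partition_on X P"
    using P unfolding is_packing_def by blast
  then show "partition_on Y (preimage_blocks g Y P)"
    using g(2) by (rule partition_on_preimage_blocks)
  fix C k
  assume "C \<in> preimage_blocks g Y P" "k \<in> {1..d}"
  then obtain B where B: "B \<in> P" and C: "C = Y \<inter> g -` B"
    unfolding preimage_blocks_def by blast
  have "B \<subseteq> X"
    using B part by (blast dest: partition_onD1)
  then have "finite B"
    using \<open>finite X\<close> by (rule finite_subset)
  let ?C\<^sub>k = "{y\<in>C. k \<in> K' y}"
  have "inj_on g ?C\<^sub>k"
    using g(1) C by (auto intro: inj_on_subset)
  have "(\<Sum>y\<in>?C\<^sub>k. s' y) \<le> (\<Sum>y\<in>?C\<^sub>k. s (g y))"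
    using C size by (intro sum_mono) auto
  also have "\<dots> = (\<Sum>i\<in>g ` ?C\<^sub>k. s i)"
    using sum.reindex[OF \<open>inj_on g ?C\<^sub>k\<close>, of s] by (simp add: comp_def)
  also have "\<dots> \<le> (\<Sum>i\<in>{i\<in>B. k \<in> K i}. s i)"
    using \<open>finite B\<close> \<open>B \<subseteq> X\<close> C type assms(3) by (intro sum_mono2) auto
  also have "\<dots> \<le> 1"
    using P B \<open>k \<in> {1..d}\<close> unfolding is_packing_def by blast
  finally show "(\<Sum>y\<in>?C\<^sub>k. s' y) \<le> 1" .
qed

lemma val_bpps_preimage_blocks:
  assumes "finite P" "\<And>y. y \<in> Y \<Longrightarrow> K' y = K (g y)"
  shows "val_bpps d K' (preimage_blocks g Y P) \<le> val_bpps d K P"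
  using assms unfolding preimage_blocks_def
  by (intro val_bpps_le_by_block_map[where F = "\<lambda>B. Y \<inter> g -` B"]) force+

lemma is_packing_singletons:
  assumes "bpps_instance d X s K"
  shows "is_packing d s K X ((\<lambda>i. {i}) ` X)"
  unfolding is_packing_def
proof (intro conjI ballI)
  show "partition_on X ((\<lambda>i. {i}) ` X)"
    by (rule partition_on_singletons)
  fix B k
  assume "B \<in> (\<lambda>i. {i}) ` X"
  then obtain j where "j \<in> X" "B = {j}" by blast
  then have "{i\<in>B. k \<in> K i} = (if k \<in> K j then {j} else {})"
    by auto
  then show "(\<Sum>i\<in>{i\<in>B. k \<in> K i}. s i) \<le> 1"
    using assms \<open>j \<in> X\<close> unfolding bpps_instance_def by simp
qed

lemma OPT_bpps_le:
  assumes "is_packing d s K X P"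
  shows "OPT_bpps d s K X \<le> val_bpps d K P"
  unfolding OPT_bpps_def using assms by (intro Least_le) blast

lemma OPT_bpps_attained:
  assumes "bpps_instance d X s K"
  obtains P where "is_packing d s K X P" "val_bpps d K P = OPT_bpps d s K X"
proof -
  have "\<exists>n P. is_packing d s K X P \<and> val_bpps d K P = n"
    using is_packing_singletons[OF assms] by blast
  from LeastI_ex[OF this] show thesis
    using that unfolding OPT_bpps_def by blast
qed

lemma OPT_bpps_le_of_inj:
  assumes inst: "bpps_instance d X s K"
    and g: "inj_on g Y" "g ` Y \<subseteq> X"
    and type: "\<And>y. y \<in> Y \<Longrightarrow> K' y = K (g y)"
    and size: "\<And>y. y \<in> Y \<Longrightarrow> s' y \<le> s (g y)"
  shows "OPT_bpps d s' K' Y \<le> OPT_bpps d s K X"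
proof -
  obtain P where P: "is_packing d s K X P" "val_bpps d K P = OPT_bpps d s K X"
    using OPT_bpps_attained[OF inst] by blast
  have "finite X" "\<forall>i\<in>X. 0 \<le> s i"
    using inst unfolding bpps_instance_def by auto
  then have "is_packing d s' K' Y (preimage_blocks g Y P)"
    using P(1) g type size by (intro is_packing_preimage_blocks)
  then have "OPT_bpps d s' K' Y \<le> val_bpps d K' (preimage_blocks g Y P)"
    by (rule OPT_bpps_le)
  also have "\<dots> \<le> val_bpps d K P"
    using is_packing_finite[OF P(1) \<open>finite X\<close>] type by (rule val_bpps_preimage_blocks)
  finally show ?thesis
    using P(2) by simp
qed

lemma mem_grpE:
  assumes "x \<in> grp m xs l"
  obtains p where "p < length xs" "p div grp_size m xs = l" "x = xs ! p"
  using assms unfolding grp_def by blast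

lemma grp_unique:
  assumes "distinct xs" "x \<in> grp m xs l" "x \<in> grp m xs l'"
  shows "l = l'"
  using assms by (auto elim!: mem_grpE simp: nth_eq_iff_index_eq)

text \<open>The item one group before \<open>x\<close> in \<open>xs\<close>; for \<open>x\<close> in group 0 the index
  subtraction truncates, so only groups \<open>l \<ge> 1\<close> are meaningful.\<close>

definition grp_shift :: "nat \<Rightarrow> 'i list \<Rightarrow> 'i \<Rightarrow> 'i" where
  "grp_shift m xs x = xs ! ((THE p. p < length xs \<and> xs ! p = x) - grp_size m xs)"

lemma grp_shift_nth:
  assumes "distinct xs" "p < length xs"
  shows "grp_shift m xs (xs ! p) = xs ! (p - grp_size m xs)"
proof -
  have "(THE p'. p' < length xs \<and> xs ! p' = xs ! p) = p"
    using assms by (auto simp: nth_eq_iff_index_eq)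
  then show ?thesis
    unfolding grp_shift_def by simp
qed

lemma grp_shift_in_set:
  assumes "distinct xs" "x \<in> grp m xs l"
  shows "grp_shift m xs x \<in> set xs"
  using assms(2) by (elim mem_grpE) (simp add: grp_shift_nth[OF assms(1)])

lemma diff_lt_of_div_eq:
  fixes p p' q :: nat
  assumes "p div q = p' div q" "0 < p div q"
  shows "p - q < p'"
proof -
  have "0 < q"
    using assms(2) by (cases "q = 0") auto
  then have "p mod q < q"
    by simp
  moreover have "p = p div q * q + p mod q" "p' = p' div q * q + p' mod q"
    by simp_all
  moreover have "q \<le> p div q * q" "p div q * q = p' div q * q"
    using assms by simp_all
  ultimately show ?thesis
    by linarith
qed

lemma Max_grp_le_grp_shift:
  assumes sorted: "sorted_wrt (\<lambda>a b. s b \<le> s a) xs" and "distinct xs"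
    and x: "x \<in> grp m xs l" and "1 \<le> l"
  shows "Max (s ` grp m xs l) \<le> s (grp_shift m xs x)"
proof -
  obtain p where p: "p < length xs" "p div grp_size m xs = l" "x = xs ! p"
    using x by (rule mem_grpE)
  have "finite (grp m xs l)"
    unfolding grp_def by simp
  moreover have "s z \<le> s (xs ! (p - grp_size m xs))" if z: "z \<in> grp m xs l" for z
  proof -
    obtain p' where p': "p' < length xs" "p' div grp_size m xs = l" "z = xs ! p'"
      using z by (rule mem_grpE)
    have "p - grp_size m xs < p'"
      using p(2) p'(2) \<open>1 \<le> l\<close> by (intro diff_lt_of_div_eq) simp_all
    then show ?thesis
      using sorted_wrt_nth_less[OF sorted _ p'(1)] p'(3) by simp
  qed
  ultimately show ?thesis
    using x p(3) grp_shift_nth[OF \<open>distinct xs\<close> p(1)] by (subst Max_le_iff) auto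
qed

lemma grp_shift_inject:
  assumes "distinct xs" "x \<in> grp m xs l" "x' \<in> grp m xs l'" "1 \<le> l" "1 \<le> l'"
    and "grp_shift m xs x = grp_shift m xs x'"
  shows "x = x'"
proof -
  obtain p where p: "p < length xs" "p div grp_size m xs = l" "x = xs ! p"
    using assms(2) by (rule mem_grpE)
  obtain p' where p': "p' < length xs" "p' div grp_size m xs = l'" "x' = xs ! p'"
    using assms(3) by (rule mem_grpE)
  have "grp_size m xs \<le> p" "grp_size m xs \<le> p'"
    using p(2) p'(2) assms(4,5) by (metis div_less not_le not_one_le_zero)+
  moreover have "xs ! (p - grp_size m xs) = xs ! (p' - grp_size m xs)"
    using assms(6) p p' grp_shift_nth[OF assms(1)] by simp
  ultimately have "p = p'"
    using p(1) p'(1) assms(1) by (simp add: nth_eq_iff_index_eq)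
  then show ?thesis
    using p(3) p'(3) by simp
qed

definition lg_shift :: "nat \<Rightarrow> ('i \<Rightarrow> nat set) \<Rightarrow> (nat set \<Rightarrow> 'i list) \<Rightarrow> 'i \<times> nat \<Rightarrow> 'i" where
  "lg_shift m K L = (\<lambda>(i, l). grp_shift m (L (K i)) i)"

lemma lg_itemsE:
  assumes "y \<in> lg_items m X K L"
  obtains i l where "y = (i, l)" "i \<in> X" "i \<in> grp m (L (K i)) l" "1 \<le> l"
  using assms unfolding lg_items_def by blast

lemma lg_shift_mem:
  assumes sorted: "sorted_type_lists X s K L" and y: "y \<in> lg_items m X K L"
  shows "lg_shift m K L y \<in> X \<and> K (lg_shift m K L y) = lg_type K y"
proof -
  obtain i l where il: "y = (i, l)" "i \<in> grp m (L (K i)) l"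
    using y by (rule lg_itemsE)
  have "grp_shift m (L (K i)) i \<in> set (L (K i))"
    using sorted il(2) unfolding sorted_type_lists_def by (blast intro: grp_shift_in_set)
  then show ?thesis
    using sorted unfolding il(1) sorted_type_lists_def lg_shift_def lg_type_def by simp
qed

lemma lg_size_le_lg_shift:
  assumes sorted: "sorted_type_lists X s K L" and y: "y \<in> lg_items m X K L"
  shows "lg_size m s K L y \<le> s (lg_shift m K L y)"
proof -
  obtain i l where il: "y = (i, l)" "i \<in> grp m (L (K i)) l" "1 \<le> l"
    using y by (rule lg_itemsE)
  have "Max (s ` grp m (L (K i)) l) \<le> s (grp_shift m (L (K i)) i)"
    using sorted il(2,3) unfolding sorted_type_lists_def by (blast intro: Max_grp_le_grp_shift)
  then show ?thesis
    unfolding il(1) lg_size_def lg_shift_def by simp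
qed

lemma inj_on_lg_shift:
  assumes "sorted_type_lists X s K L"
  shows "inj_on (lg_shift m K L) (lg_items m X K L)"
proof (rule inj_onI)
  fix y y'
  assume y: "y \<in> lg_items m X K L" and y': "y' \<in> lg_items m X K L"
    and eq: "lg_shift m K L y = lg_shift m K L y'"
  obtain i l where il: "y = (i, l)" "i \<in> grp m (L (K i)) l" "1 \<le> l"
    using y by (rule lg_itemsE)
  obtain i' l' where il': "y' = (i', l')" "i' \<in> grp m (L (K i')) l'" "1 \<le> l'"
    using y' by (rule lg_itemsE)
  have "K i = K i'"
    using lg_shift_mem[OF assms y] lg_shift_mem[OF assms y'] eq
    by (simp add: il(1) il'(1) lg_type_def)
  have distinct: "distinct (L (K i))"
    using assms unfolding sorted_type_lists_def by blast
  have shift_eq: "grp_shift m (L (K i)) i = grp_shift m (L (K i)) i'"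
    using eq \<open>K i = K i'\<close> by (simp add: il(1) il'(1) lg_shift_def)
  note mem' = il'(2)[folded \<open>K i = K i'\<close>]
  have "i = i'"
    using distinct il(2) mem' il(3) il'(3) shift_eq by (rule grp_shift_inject)
  moreover have "l = l'"
    using distinct il(2) mem' unfolding \<open>i = i'\<close> by (rule grp_unique)
  ultimately show "y = y'"
    using il(1) il'(1) by simp
qed

lemma OPT_bpps_lg_le:
  assumes "bpps_instance d X s K" "sorted_type_lists X s K L"
  shows "OPT_bpps d (lg_size m s K L) (lg_type K) (lg_items m X K L) \<le> OPT_bpps d s K X"
proof (rule OPT_bpps_le_of_inj[where g = "lg_shift m K L"])
  show "inj_on (lg_shift m K L) (lg_items m X K L)"
    using assms(2) by (rule inj_on_lg_shift)
  show "lg_shift m K L ` lg_items m X K L \<subseteq> X"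
    using lg_shift_mem[OF assms(2)] by blast
  show "lg_type K y = K (lg_shift m K L y)" if "y \<in> lg_items m X K L" for y
    using lg_shift_mem[OF assms(2) that] by simp
  show "lg_size m s K L y \<le> s (lg_shift m K L y)" if "y \<in> lg_items m X K L" for y
    using assms(2) that by (rule lg_size_le_lg_shift)
qed (rule assms(1))

lemma finite_lg_items:
  assumes "finite X"
  shows "finite (lg_items m X K L)"
proof (rule finite_subset)
  show "lg_items m X K L \<subseteq> (SIGMA i:X. (\<lambda>p. p div grp_size m (L (K i))) ` {..<length (L (K i))})"
    unfolding lg_items_def by (auto elim: mem_grpE)
  show "finite \<dots>"
    using assms by blast
qed

theorem lemma6:
  fixes d m :: nat and \<epsilon> :: real and X :: "'i set" and s :: "'i \<Rightarrow> real"
    and K :: "'i \<Rightarrow> nat set" and L :: "nat set \<Rightarrow> 'i list"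
    and Pbar :: "('i \<times> nat) set set"
  assumes inst: "bpps_instance d X s K"
    and eps: "0 < \<epsilon>" "\<epsilon> \<le> 1/4" "\<exists>N::nat. 1 / \<epsilon> = real N"
    and m_def: "real m = 2 ^ d / \<epsilon> ^ 3 - 1"
    and big: "\<forall>i\<in>X. s i \<ge> \<epsilon>\<^sup>2"
    and sorted: "sorted_type_lists X s K L"
    and Pbar_pack: "is_packing d (lg_size m s K L) (lg_type K) (lg_items m X K L) Pbar"
    and Pbar_opt: "val_bpps d (lg_type K) Pbar
                    = OPT_bpps d (lg_size m s K L) (lg_type K) (lg_items m X K L)"
  shows "val_bpps d K ((\<lambda>B. fst ` B) ` Pbar) \<le> OPT_bpps d s K X"
proof -
  have "finite X"
    using inst unfolding bpps_instance_def by blast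
  then have "finite Pbar"
    using Pbar_pack finite_lg_items is_packing_finite by blast
  then have "val_bpps d K ((\<lambda>B. fst ` B) ` Pbar) \<le> val_bpps d (lg_type K) Pbar"
    by (rule val_bpps_image_blocks) (auto simp: lg_type_def)
  also have "\<dots> \<le> OPT_bpps d s K X"
    unfolding Pbar_opt using inst sorted by (rule OPT_bpps_lg_le)
  finally show ?thesis .
qed

end
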